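(* For any smooth function $f$ on the total space $\mathfrak X$ and all $k,l$, $$\overline{v_l}(\xi_kf)-\xi_k(\overline{v_l}f)=\bar P(e_{k\bar l})P(f)-2f_{k\bar l}\Box f+\lambda^{-1}\partial_zf_{k\bar l}\,\partial_{\bar z}f.$$
   Context: $g\ge2$, $n=3g-3$. Over a local chart of (a manifold cover of) $\mathcal M_g$ with holomorphic coordinates $s_1,\dots,s_n$, $\partial_i=\partial/\partial s_i$, let $\mathfrak X$ be the universal family with local fiber coordinate $z$. Each fiber carries the hyperbolic metric $\frac{\sqrt{-1}}2\lambda\,dz\wedge d\bar z$ with $\partial_z\partial_{\bar z}\log\lambda=\lambda$. $a_i=-\lambda^{-1}\partial_i\partial_{\bar z}\log\lambda$, $A_i=\partial_{\bar z}a_i$, $v_i=\partial_i+a_i\partial_z$, $\overline{v_l}$ its complex conjugate. $\Box=-\lambda^{-1}\partial_z\partial_{\bar z}$. $e_{i\bar j}=\partial_i\partial_{\bar j}\log\lambda-\lambda a_i\overline{a_j}$, $f_{i\bar j}=A_i\overline{A_j}$. $P(f)=\partial_z(\lambda^{-1}\partial_zf)$, $\bar P(f)=\partial_{\bar z}(\lambda^{-1}\partial_{\bar z}f)$, $\xi_k(f)=-\lambda^{-1}\partial_z(A_k\partial_zf)$. *)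

theory Defs
  imports "HOL-Analysis.Analysis"
begin

text \<open>Local chart: points are (s, z) with base coordinates s in C^n (index type 'n)
  and fiber coordinate z in C. Functions are complex valued; derivatives are
  Wirtinger derivatives built from the real Frechet derivative.\<close>

type_synonym 'n pt = "(complex ^ 'n) \<times> complex"

definition pd :: "('n::finite pt \<Rightarrow> complex) \<Rightarrow> 'n pt \<Rightarrow> 'n pt \<Rightarrow> complex" where
  "pd F v p = frechet_derivative F (at p) v"

fun dd :: "'n::finite pt list \<Rightarrow> ('n pt \<Rightarrow> complex) \<Rightarrow> ('n pt \<Rightarrow> complex)" where
  "dd [] F = F"
| "dd (v # vs) F = (\<lambda>p. pd (dd vs F) v p)"

definition cinf_on :: "'n::finite pt set \<Rightarrow> ('n pt \<Rightarrow> complex) \<Rightarrow> bool" where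
  "cinf_on U F \<longleftrightarrow> (\<forall>vs. dd vs F differentiable_on U)"

definition dz :: "('n::finite pt \<Rightarrow> complex) \<Rightarrow> 'n pt \<Rightarrow> complex" where
  "dz F p = (pd F (0, 1) p - \<i> * pd F (0, \<i>) p) / 2"

definition dzb :: "('n::finite pt \<Rightarrow> complex) \<Rightarrow> 'n pt \<Rightarrow> complex" where
  "dzb F p = (pd F (0, 1) p + \<i> * pd F (0, \<i>) p) / 2"

definition ds :: "'n::finite \<Rightarrow> ('n pt \<Rightarrow> complex) \<Rightarrow> 'n pt \<Rightarrow> complex" where
  "ds k F p = (pd F (axis k 1, 0) p - \<i> * pd F (axis k \<i>, 0) p) / 2"

definition dsb :: "'n::finite \<Rightarrow> ('n pt \<Rightarrow> complex) \<Rightarrow> 'n pt \<Rightarrow> complex" where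
  "dsb k F p = (pd F (axis k 1, 0) p + \<i> * pd F (axis k \<i>, 0) p) / 2"

definition Lam :: "('n::finite pt \<Rightarrow> real) \<Rightarrow> 'n pt \<Rightarrow> complex" where
  "Lam lam p = complex_of_real (lam p)"

definition logL :: "('n::finite pt \<Rightarrow> real) \<Rightarrow> 'n pt \<Rightarrow> complex" where
  "logL lam p = complex_of_real (ln (lam p))"

definition aa :: "('n::finite pt \<Rightarrow> real) \<Rightarrow> 'n \<Rightarrow> 'n pt \<Rightarrow> complex" where
  "aa lam i p = - ds i (dzb (logL lam)) p / Lam lam p"

definition AA :: "('n::finite pt \<Rightarrow> real) \<Rightarrow> 'n \<Rightarrow> 'n pt \<Rightarrow> complex" where
  "AA lam i = dzb (aa lam i)"

definition vbar :: "('n::finite pt \<Rightarrow> real) \<Rightarrow> 'n \<Rightarrow> ('n pt \<Rightarrow> complex) \<Rightarrow> 'n pt \<Rightarrow> complex" where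
  "vbar lam l F p = dsb l F p + cnj (aa lam l p) * dzb F p"

definition Box :: "('n::finite pt \<Rightarrow> real) \<Rightarrow> ('n pt \<Rightarrow> complex) \<Rightarrow> 'n pt \<Rightarrow> complex" where
  "Box lam F p = - dz (dzb F) p / Lam lam p"

definition ee :: "('n::finite pt \<Rightarrow> real) \<Rightarrow> 'n \<Rightarrow> 'n \<Rightarrow> 'n pt \<Rightarrow> complex" where
  "ee lam i j p = ds i (dsb j (logL lam)) p - Lam lam p * aa lam i p * cnj (aa lam j p)"

definition ff :: "('n::finite pt \<Rightarrow> real) \<Rightarrow> 'n \<Rightarrow> 'n \<Rightarrow> 'n pt \<Rightarrow> complex" where
  "ff lam i j p = AA lam i p * cnj (AA lam j p)"

definition PP :: "('n::finite pt \<Rightarrow> real) \<Rightarrow> ('n pt \<Rightarrow> complex) \<Rightarrow> 'n pt \<Rightarrow> complex" where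
  "PP lam F = dz (\<lambda>q. dz F q / Lam lam q)"

definition PPbar :: "('n::finite pt \<Rightarrow> real) \<Rightarrow> ('n pt \<Rightarrow> complex) \<Rightarrow> 'n pt \<Rightarrow> complex" where
  "PPbar lam F = dzb (\<lambda>q. dzb F q / Lam lam q)"

definition xi :: "('n::finite pt \<Rightarrow> real) \<Rightarrow> 'n \<Rightarrow> ('n pt \<Rightarrow> complex) \<Rightarrow> 'n pt \<Rightarrow> complex" where
  "xi lam k F p = - dz (\<lambda>q. AA lam k q * dz F q) p / Lam lam p"

end

theory Submission
  imports Defs
begin

text \<open>Write L = log \<lambda>, so that \<lambda> = e^L and the curvature equation reads \<partial>_z \<partial>_zbar L = e^L.
  Both sides of the identity are polynomial expressions in Wirtinger derivatives of L and f and in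
  e^(\<plusminus>L). Expanding them with the Leibniz rules, commuting mixed partial derivatives (Schwarz's
  theorem), using that L is real, and substituting the curvature equation wherever \<partial>_zbar \<partial>_z L
  occurs brings both sides to the same normal form. All functions occurring in this computation are
  smooth, since smooth functions on U are closed under sums, products, exp and conjugation, and L
  itself is smooth because its derivative is again of that form in terms of L.\<close>

section \<open>Symmetry of second derivatives\<close>

lemma second_difference_bound:
  fixes F :: "'a::real_normed_vector \<Rightarrow> 'b::real_normed_vector"
  assumes dF: "\<And>q. q \<in> S \<Longrightarrow> (F has_derivative DF q) (at q)"
    and S: "\<And>s. s \<in> {0..t} \<Longrightarrow> p + s *\<^sub>R v \<in> S \<and> p + s *\<^sub>R v + t *\<^sub>R w \<in> S"
    and B: "\<And>s. s \<in> {0..t} \<Longrightarrow> norm (DF (p + s *\<^sub>R v + t *\<^sub>R w) v - DF (p + s *\<^sub>R v) v - c) \<le> B"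
    and t: "0 \<le> t"
  shows "norm (F (p + t *\<^sub>R v + t *\<^sub>R w) - F (p + t *\<^sub>R v) - F (p + t *\<^sub>R w) + F p - t *\<^sub>R c) \<le> B * t"
proof -
  define g where "g s = F (p + s *\<^sub>R v + t *\<^sub>R w) - F (p + s *\<^sub>R v) - s *\<^sub>R c" for s
  define g' where "g' s ds = ds *\<^sub>R (DF (p + s *\<^sub>R v + t *\<^sub>R w) v - DF (p + s *\<^sub>R v) v - c)" for s ds
  have "(g has_derivative g' s) (at s within {0..t})" if s: "s \<in> {0..t}" for s
  proof -
    have lin: "DF q (ds *\<^sub>R v) = ds *\<^sub>R DF q v" if "q \<in> S" for q ds
      using dF[OF that] by (simp add: has_derivative_bounded_linear linear_simps bounded_linear.linear)
    have "(g has_derivative (\<lambda>ds. DF (p + s *\<^sub>R v + t *\<^sub>R w) (ds *\<^sub>R v) - DF (p + s *\<^sub>R v) (ds *\<^sub>R v) - ds *\<^sub>R c)) (at s)"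
      unfolding g_def using S[OF s]
      by (auto intro!: derivative_eq_intros has_derivative_compose[of "\<lambda>s. p + s *\<^sub>R _ + _", OF _ dF]
          has_derivative_compose[of "\<lambda>s. p + s *\<^sub>R _", OF _ dF])
    moreover have "(\<lambda>ds. DF (p + s *\<^sub>R v + t *\<^sub>R w) (ds *\<^sub>R v) - DF (p + s *\<^sub>R v) (ds *\<^sub>R v) - ds *\<^sub>R c) = g' s"
      using S[OF s] by (simp add: fun_eq_iff g'_def lin scaleR_diff_right)
    ultimately show ?thesis
      by (simp add: has_derivative_at_withinI)
  qed
  moreover have "onorm (g' s) \<le> B" if "s \<in> {0..t}" for s
    using B[OF that] by (intro onorm_le) (simp add: g'_def, metis abs_ge_zero mult.commute mult_left_mono)
  ultimately have "norm (g t - g 0) \<le> B * norm (t - 0)"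
    using t by (intro differentiable_bound[of "{0..t}"]) auto
  then show ?thesis
    using t by (simp add: g_def algebra_simps)
qed

lemma linear_approx_increment_le:
  assumes D: "linear D"
    and approx: "\<And>h. norm h < d \<Longrightarrow> norm (G (p + h) - G p - D h) \<le> c * norm h"
    and "norm h1 < d" "norm h2 < d"
  shows "norm (G (p + h1) - G (p + h2) - D (h1 - h2)) \<le> c * (norm h1 + norm h2)"
proof -
  have "G (p + h1) - G (p + h2) - D (h1 - h2) = (G (p + h1) - G p - D h1) - (G (p + h2) - G p - D h2)"
    by (simp add: linear_diff[OF D])
  also have "norm \<dots> \<le> norm (G (p + h1) - G p - D h1) + norm (G (p + h2) - G p - D h2)"
    by (rule norm_triangle_ineq4)
  also have "\<dots> \<le> c * norm h1 + c * norm h2"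
    using approx assms(3,4) by (intro add_mono) auto
  finally show ?thesis
    by (simp add: distrib_left)
qed

lemma second_difference_estimate:
  fixes F :: "'a::real_normed_vector \<Rightarrow> 'b::real_normed_vector"
  assumes U: "open U" "p \<in> U"
    and dF: "\<And>q. q \<in> U \<Longrightarrow> (F has_derivative DF q) (at q)"
    and dDF: "((\<lambda>q. DF q v) has_derivative D) (at p)"
    and e: "e > 0"
  shows "\<exists>d>0. \<forall>t. 0 < t \<and> t < d \<longrightarrow>
     norm (F (p + t *\<^sub>R v + t *\<^sub>R w) - F (p + t *\<^sub>R v) - F (p + t *\<^sub>R w) + F p - (t * t) *\<^sub>R D w)
       \<le> e * (t * t)"
proof -
  define K where "K = norm v + norm w + 1"
  have K: "K \<ge> 1"
    by (simp add: K_def)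
  have "e / (2 * K) > 0"
    using e K by simp
  then obtain d1 where d1: "d1 > 0" and
    "\<And>y. norm (y - p) < d1 \<Longrightarrow> norm (DF y v - DF p v - D (y - p)) \<le> e / (2 * K) * norm (y - p)"
    using dDF unfolding has_derivative_at_alt by blast
  then have approx: "\<And>h. norm h < d1 \<Longrightarrow> norm (DF (p + h) v - DF p v - D h) \<le> e / (2 * K) * norm h"
    by (metis add_diff_cancel_left')
  obtain d2 where d2: "d2 > 0" "ball p d2 \<subseteq> U"
    using U open_contains_ball by blast
  show ?thesis
  proof (intro exI[of _ "min d1 d2 / K"] conjI allI impI)
    fix t assume t: "0 < t \<and> t < min d1 d2 / K"
    have small: "norm (s *\<^sub>R v + r *\<^sub>R w) \<le> t * (norm v + norm w)"
      if "s \<in> {0..t}" "r \<in> {0..t}" for s r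
      using that norm_triangle_le[of "s *\<^sub>R v" "r *\<^sub>R w"] mult_right_mono[of r t "norm w"]
        mult_right_mono[of s t "norm v"] by (auto simp: distrib_left)
    have "t * (norm v + norm w) < t * K"
      using t by (simp add: K_def)
    also have "\<dots> < min d1 d2"
      using t K by (simp add: field_simps)
    finally have near: "norm (s *\<^sub>R v + r *\<^sub>R w) < d1" "p + (s *\<^sub>R v + r *\<^sub>R w) \<in> U"
      if "s \<in> {0..t}" "r \<in> {0..t}" for s r
      using small[OF that] norm_minus_cancel[of "s *\<^sub>R v + r *\<^sub>R w"]
      by (auto simp: dist_norm intro!: subsetD[OF d2(2)])
    have "norm (DF (p + s *\<^sub>R v + t *\<^sub>R w) v - DF (p + s *\<^sub>R v) v - t *\<^sub>R D w) \<le> e * t"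
      if s: "s \<in> {0..t}" for s
    proof -
      let ?h1 = "s *\<^sub>R v + t *\<^sub>R w" and ?h2 = "s *\<^sub>R v + 0 *\<^sub>R w"
      have "norm (DF (p + ?h1) v - DF (p + ?h2) v - D (?h1 - ?h2)) \<le> e / (2 * K) * (norm ?h1 + norm ?h2)"
        using near(1)[OF s, of t] near(1)[OF s, of 0] t
        by (intro linear_approx_increment_le[of D d1 "\<lambda>q. DF q v"] has_derivative_linear[OF dDF] approx)
          auto
      also have "\<dots> \<le> e / (2 * K) * (2 * (t * K))"
        using small[OF s, of t] small[OF s, of 0] t e K
        by (intro mult_left_mono) (auto simp: K_def field_simps)
      finally show ?thesis
        using K by (simp add: linear_scale[OF has_derivative_linear[OF dDF]] add.assoc)
    qed
    then have "norm (F (p + t *\<^sub>R v + t *\<^sub>R w) - F (p + t *\<^sub>R v) - F (p + t *\<^sub>R w) + F p - t *\<^sub>R (t *\<^sub>R D w))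
        \<le> e * t * t"
      using t near(2) near(2)[of _ 0, simplified]
      by (intro second_difference_bound[of U F DF]) (auto simp: dF add.assoc)
    then show "norm (F (p + t *\<^sub>R v + t *\<^sub>R w) - F (p + t *\<^sub>R v) - F (p + t *\<^sub>R w) + F p
        - (t * t) *\<^sub>R D w) \<le> e * (t * t)"
      by (simp add: mult.assoc)
  qed (use d1 d2 K in auto)
qed

lemma has_derivative_second_symmetric:
  fixes F :: "'a::real_normed_vector \<Rightarrow> 'b::real_normed_vector"
  assumes U: "open U" "p \<in> U"
    and dF: "\<And>q. q \<in> U \<Longrightarrow> (F has_derivative DF q) (at q)"
    and dv: "((\<lambda>q. DF q v) has_derivative Dv) (at p)"
    and dw: "((\<lambda>q. DF q w) has_derivative Dw) (at p)"
  shows "Dv w = Dw v"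
proof -
  have key: "norm (Dv w - Dw v) \<le> 2 * e" if e: "e > 0" for e
  proof -
    obtain d1 where "d1 > 0" and est_v: "\<And>t. 0 < t \<and> t < d1 \<Longrightarrow>
        norm (F (p + t *\<^sub>R v + t *\<^sub>R w) - F (p + t *\<^sub>R v) - F (p + t *\<^sub>R w) + F p - (t * t) *\<^sub>R Dv w)
          \<le> e * (t * t)"
      using second_difference_estimate[OF U dF dv e] by blast
    obtain d2 where "d2 > 0" and est_w: "\<And>t. 0 < t \<and> t < d2 \<Longrightarrow>
        norm (F (p + t *\<^sub>R w + t *\<^sub>R v) - F (p + t *\<^sub>R w) - F (p + t *\<^sub>R v) + F p - (t * t) *\<^sub>R Dw v)
          \<le> e * (t * t)"
      using second_difference_estimate[OF U dF dw e] by blast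
    define t where "t = min d1 d2 / 2"
    have t: "0 < t" "t < d1" "t < d2"
      using \<open>d1 > 0\<close> \<open>d2 > 0\<close> by (auto simp: t_def)
    define \<Delta> where "\<Delta> = F (p + t *\<^sub>R v + t *\<^sub>R w) - F (p + t *\<^sub>R v) - F (p + t *\<^sub>R w) + F p"
    have "\<Delta> = F (p + t *\<^sub>R w + t *\<^sub>R v) - F (p + t *\<^sub>R w) - F (p + t *\<^sub>R v) + F p"
      by (simp add: \<Delta>_def algebra_simps)
    then have "(t * t) *\<^sub>R (Dv w - Dw v) = (\<Delta> - (t * t) *\<^sub>R Dw v) - (\<Delta> - (t * t) *\<^sub>R Dv w)"
      by (simp add: algebra_simps)
    then have "norm ((t * t) *\<^sub>R (Dv w - Dw v)) \<le> norm (\<Delta> - (t * t) *\<^sub>R Dw v) + norm (\<Delta> - (t * t) *\<^sub>R Dv w)"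
      by (metis norm_triangle_ineq4)
    then have "(t * t) * norm (Dv w - Dw v) \<le> norm (\<Delta> - (t * t) *\<^sub>R Dw v) + norm (\<Delta> - (t * t) *\<^sub>R Dv w)"
      by simp
    also have "\<dots> \<le> (t * t) * (2 * e)"
      using est_v[of t] est_w[of t] t unfolding \<Delta>_def by (simp add: algebra_simps)
    finally show ?thesis
      using t by simp
  qed
  have "norm (Dv w - Dw v) \<le> 0 + e" if "e > 0" for e
    using key[of "e / 2"] that by simp
  then have "norm (Dv w - Dw v) \<le> 0"
    by (rule field_le_epsilon)
  then show ?thesis
    by simp
qed

section \<open>Directional derivatives and smooth functions\<close>

lemma has_derivative_pd: "F differentiable at p \<Longrightarrow> (F has_derivative (\<lambda>v. pd F v p)) (at p)"
  unfolding pd_def by (metis frechet_derivative_works eta_contract_eq)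

lemma pd_eqI: "(F has_derivative D) (at p) \<Longrightarrow> pd F v p = D v"
  unfolding pd_def by (metis frechet_derivative_at)

lemma pd_cong_open:
  assumes "open U" "p \<in> U" "\<And>q. q \<in> U \<Longrightarrow> F q = G q"
  shows "pd F v p = pd G v p"
proof -
  have "(F has_derivative D) (at p) \<longleftrightarrow> (G has_derivative D) (at p)" for D
    using assms has_derivative_transform_within_open[of _ D p UNIV U] by (metis (mono_tags))
  then show ?thesis
    unfolding pd_def frechet_derivative_def by simp
qed

lemma pd_const: "pd (\<lambda>q. c) v p = 0"
  by (rule pd_eqI) (rule has_derivative_const)

lemma pd_add:
  "F differentiable at p \<Longrightarrow> G differentiable at p \<Longrightarrow> pd (\<lambda>q. F q + G q) v p = pd F v p + pd G v p"
  by (rule pd_eqI) (intro has_derivative_add has_derivative_pd)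

lemma pd_mult:
  "F differentiable at p \<Longrightarrow> G differentiable at p \<Longrightarrow>
    pd (\<lambda>q. F q * G q) v p = pd F v p * G p + F p * pd G v p"
  by (rule pd_eqI, rule has_derivative_eq_rhs, rule has_derivative_mult[OF has_derivative_pd has_derivative_pd])
    (auto simp: algebra_simps)

lemma pd_exp: "F differentiable at p \<Longrightarrow> pd (\<lambda>q. exp (F q :: complex)) v p = exp (F p) * pd F v p"
  by (rule pd_eqI, rule has_derivative_eq_rhs,
      rule has_derivative_compose[OF has_derivative_pd DERIV_exp[unfolded has_field_derivative_def]]) auto

lemma pd_cnj: "F differentiable at p \<Longrightarrow> pd (\<lambda>q. cnj (F q)) v p = cnj (pd F v p)"
  by (rule pd_eqI) (rule has_derivative_cnj[OF has_derivative_pd])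

lemma pd_wirtinger_combination:
  "F differentiable at p \<Longrightarrow> G differentiable at p \<Longrightarrow>
    pd (\<lambda>q. (F q + c * G q) / 2) v p = (pd F v p + c * pd G v p) / 2"
  by (rule pd_eqI) (auto intro!: derivative_eq_intros has_derivative_pd)

lemma pd_symmetric:
  assumes "open U" "p \<in> U" "\<And>q. q \<in> U \<Longrightarrow> F differentiable at q"
    and "pd F v differentiable at p" "pd F w differentiable at p"
  shows "pd (pd F v) w p = pd (pd F w) v p"
  using has_derivative_second_symmetric[OF assms(1,2) has_derivative_pd[OF assms(3)]
      has_derivative_pd[OF assms(4)] has_derivative_pd[OF assms(5)]] .

lemma dd_append: "dd vs (pd F v) = dd (vs @ [v]) F"
  by (induction vs) auto

lemma cinf_on_pd: "cinf_on U F \<Longrightarrow> cinf_on U (pd F v)"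
  unfolding cinf_on_def by (simp add: dd_append)

lemma cinf_on_imp_differentiable_on: "cinf_on U F \<Longrightarrow> F differentiable_on U"
  unfolding cinf_on_def by (metis dd.simps(1))

lemma cinf_on_imp_differentiable_at: "open U \<Longrightarrow> cinf_on U F \<Longrightarrow> q \<in> U \<Longrightarrow> F differentiable at q"
  using cinf_on_imp_differentiable_on differentiable_on_eq_differentiable_at by blast

lemma differentiable_on_cong: "(\<And>q. q \<in> U \<Longrightarrow> F q = G q) \<Longrightarrow> F differentiable_on U \<Longrightarrow> G differentiable_on U"
  unfolding differentiable_on_def differentiable_def by (metis has_derivative_transform)

lemma cinf_on_coinduct:
  assumes U: "open U" and "P F"
    and step: "\<And>F. P F \<Longrightarrow> F differentiable_on U \<and> (\<forall>v. \<exists>G. P G \<and> (\<forall>q\<in>U. pd F v q = G q))"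
  shows "cinf_on U F"
proof -
  have "\<exists>G. P G \<and> (\<forall>q\<in>U. dd vs F q = G q)" if "P F" for vs F
    using that
  proof (induction vs arbitrary: F)
    case (Cons v vs)
    then obtain G where G: "P G" "\<forall>q\<in>U. dd vs F q = G q"
      by blast
    moreover obtain G' where "P G'" "\<forall>q\<in>U. pd G v q = G' q"
      using step[OF G(1)] by blast
    ultimately show ?case
      using pd_cong_open[OF U, of _ "dd vs F" G v] by auto
  qed auto
  then show ?thesis
    unfolding cinf_on_def using \<open>P F\<close> step differentiable_on_cong by metis
qed

lemma cinf_on_cong:
  assumes U: "open U" and "cinf_on U F" "\<And>q. q \<in> U \<Longrightarrow> F q = G q"
  shows "cinf_on U G"
proof (rule cinf_on_coinduct[OF U, where P = "\<lambda>H. \<exists>F. cinf_on U F \<and> (\<forall>q\<in>U. F q = H q)"])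
  fix H assume "\<exists>F. cinf_on U F \<and> (\<forall>q\<in>U. F q = H q)"
  then obtain F where F: "cinf_on U F" "\<forall>q\<in>U. F q = H q"
    by blast
  then have "\<forall>q\<in>U. pd H v q = pd F v q" for v
    using pd_cong_open[OF U] by metis
  then show "H differentiable_on U \<and> (\<forall>v. \<exists>G. (\<exists>F. cinf_on U F \<and> (\<forall>q\<in>U. F q = G q)) \<and> (\<forall>q\<in>U. pd H v q = G q))"
    using F cinf_on_pd cinf_on_imp_differentiable_on differentiable_on_cong by metis
qed (use assms in blast)

inductive_set cinf_closure :: "'n::finite pt set \<Rightarrow> ('n pt \<Rightarrow> complex) set \<Rightarrow> ('n pt \<Rightarrow> complex) set"
  for U B where
  smooth: "cinf_on U F \<Longrightarrow> F \<in> cinf_closure U B"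
| generator: "F \<in> B \<Longrightarrow> F \<in> cinf_closure U B"
| const: "(\<lambda>q. c) \<in> cinf_closure U B"
| add: "F \<in> cinf_closure U B \<Longrightarrow> G \<in> cinf_closure U B \<Longrightarrow> (\<lambda>q. F q + G q) \<in> cinf_closure U B"
| mult: "F \<in> cinf_closure U B \<Longrightarrow> G \<in> cinf_closure U B \<Longrightarrow> (\<lambda>q. F q * G q) \<in> cinf_closure U B"
| exp: "F \<in> cinf_closure U B \<Longrightarrow> (\<lambda>q. exp (F q)) \<in> cinf_closure U B"
| cnj: "F \<in> cinf_closure U B \<Longrightarrow> (\<lambda>q. cnj (F q)) \<in> cinf_closure U B"

lemma cinf_closure_differentiable_on:
  assumes "\<And>b. b \<in> B \<Longrightarrow> b differentiable_on U" and "F \<in> cinf_closure U B"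
  shows "F differentiable_on U"
  using assms(2)
proof induction
  case (exp F)
  then show ?case
    unfolding differentiable_on_def differentiable_def
    using has_derivative_compose[OF _ DERIV_exp[unfolded has_field_derivative_def]] by blast
next
  case (cnj F)
  then show ?case
    unfolding differentiable_on_def by (simp add: differentiable_cnj_iff)
qed (auto simp: assms cinf_on_imp_differentiable_on intro: differentiable_on_add differentiable_on_mult)

lemma cinf_closure_differentiable_at:
  assumes "open U" "\<And>b. b \<in> B \<Longrightarrow> b differentiable_on U" "F \<in> cinf_closure U B" "q \<in> U"
  shows "F differentiable at q"
  using assms cinf_closure_differentiable_on differentiable_on_eq_differentiable_at by blast

lemma cinf_closure_pd:
  assumes U: "open U" and B_diff: "\<And>b. b \<in> B \<Longrightarrow> b differentiable_on U"
    and B_pd: "\<And>b v. b \<in> B \<Longrightarrow> \<exists>G\<in>cinf_closure U B. \<forall>q\<in>U. pd b v q = G q"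
    and "F \<in> cinf_closure U B"
  shows "\<exists>G\<in>cinf_closure U B. \<forall>q\<in>U. pd F v q = G q"
  using assms(4)
proof induction
  case (smooth F)
  then show ?case
    by (intro bexI[of _ "pd F v"] cinf_closure.smooth cinf_on_pd) auto
next
  case (generator F)
  then show ?case
    by (rule B_pd)
next
  case (const c)
  then show ?case
    by (auto simp: pd_const intro!: cinf_closure.const)
next
  case (add F G)
  then obtain F' G' where "F' \<in> cinf_closure U B" "G' \<in> cinf_closure U B"
    "\<forall>q\<in>U. pd F v q = F' q" "\<forall>q\<in>U. pd G v q = G' q"
    by blast
  with add show ?case
    by (intro bexI[of _ "\<lambda>q. F' q + G' q"] cinf_closure.add)
      (auto simp: pd_add cinf_closure_differentiable_at[OF U B_diff])
next
  case (mult F G)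
  then obtain F' G' where "F' \<in> cinf_closure U B" "G' \<in> cinf_closure U B"
    "\<forall>q\<in>U. pd F v q = F' q" "\<forall>q\<in>U. pd G v q = G' q"
    by blast
  with mult show ?case
    by (intro bexI[of _ "\<lambda>q. F' q * G q + F q * G' q"] cinf_closure.add cinf_closure.mult)
      (auto simp: pd_mult cinf_closure_differentiable_at[OF U B_diff])
next
  case (exp F)
  then obtain F' where "F' \<in> cinf_closure U B" "\<forall>q\<in>U. pd F v q = F' q"
    by blast
  with exp show ?case
    by (intro bexI[of _ "\<lambda>q. exp (F q) * F' q"] cinf_closure.mult cinf_closure.exp)
      (auto simp: pd_exp cinf_closure_differentiable_at[OF U B_diff])
next
  case (cnj F)
  then obtain F' where "F' \<in> cinf_closure U B" "\<forall>q\<in>U. pd F v q = F' q"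
    by blast
  with cnj show ?case
    by (intro bexI[of _ "\<lambda>q. cnj (F' q)"] cinf_closure.cnj)
      (auto simp: pd_cnj cinf_closure_differentiable_at[OF U B_diff])
qed

lemma cinf_on_cinf_closure:
  assumes U: "open U" and B_diff: "\<And>b. b \<in> B \<Longrightarrow> b differentiable_on U"
    and B_pd: "\<And>b v. b \<in> B \<Longrightarrow> \<exists>G\<in>cinf_closure U B. \<forall>q\<in>U. pd b v q = G q"
    and "F \<in> cinf_closure U B"
  shows "cinf_on U F"
proof (rule cinf_on_coinduct[OF U, where P = "\<lambda>F. F \<in> cinf_closure U B"])
  fix H assume H: "H \<in> cinf_closure U B"
  show "H differentiable_on U \<and> (\<forall>v. \<exists>G. G \<in> cinf_closure U B \<and> (\<forall>q\<in>U. pd H v q = G q))"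
    using cinf_closure_differentiable_on[OF B_diff H] cinf_closure_pd[OF U B_diff B_pd H] by blast
qed (rule assms(4))

context
  fixes U :: "'n::finite pt set"
  assumes U: "open U"
begin

lemma cinf_on_const: "cinf_on U (\<lambda>q. c)"
  and cinf_on_add: "cinf_on U F \<Longrightarrow> cinf_on U G \<Longrightarrow> cinf_on U (\<lambda>q. F q + G q)"
  and cinf_on_mult: "cinf_on U F \<Longrightarrow> cinf_on U G \<Longrightarrow> cinf_on U (\<lambda>q. F q * G q)"
  and cinf_on_exp: "cinf_on U F \<Longrightarrow> cinf_on U (\<lambda>q. exp (F q))"
  and cinf_on_cnj: "cinf_on U F \<Longrightarrow> cinf_on U (\<lambda>q. cnj (F q))"
  by (auto intro!: cinf_on_cinf_closure[OF U, of "{}"] intro: cinf_closure.intros)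

lemma cinf_on_minus: "cinf_on U F \<Longrightarrow> cinf_on U (\<lambda>q. - F q)"
  using cinf_on_mult[OF cinf_on_const[of "- 1"], of F] by simp

lemma cinf_on_diff: "cinf_on U F \<Longrightarrow> cinf_on U G \<Longrightarrow> cinf_on U (\<lambda>q. F q - G q)"
  using cinf_on_add[of F "\<lambda>q. - G q"] cinf_on_minus[of G] by simp

lemma cinf_on_divide_const: "cinf_on U F \<Longrightarrow> cinf_on U (\<lambda>q. F q / c)"
  using cinf_on_mult[OF _ cinf_on_const[of "inverse c"], of F] by (simp add: divide_inverse)

lemma has_derivative_logL:
  assumes "Lam lam differentiable at q" "lam q > 0"
  shows "(logL lam has_derivative (\<lambda>v. of_real (Re (pd (Lam lam) v q)) / Lam lam q)) (at q)"
proof -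
  have "(lam has_derivative (\<lambda>v. Re (pd (Lam lam) v q))) (at q)"
    using has_derivative_Re[OF has_derivative_pd[OF assms(1)]] by (simp add: Lam_def)
  then have "((\<lambda>x. ln (lam x)) has_derivative (\<lambda>v. Re (pd (Lam lam) v q) * (1 / lam q))) (at q)"
    by (rule DERIV_compose_FDERIV[where g = lam and x = q, OF DERIV_ln_divide[OF assms(2)]])
  then have "((\<lambda>x. complex_of_real (ln (lam x))) has_derivative
      (\<lambda>v. complex_of_real (Re (pd (Lam lam) v q) * (1 / lam q)))) (at q)"
    by (rule bounded_linear.has_derivative[OF bounded_linear_of_real])
  then show ?thesis
    by (simp add: logL_def[abs_def] Lam_def of_real_divide)
qed

text \<open>The derivative of logL lam is (Re d\<lambda>) e^(-logL lam), so logL lam lies in the closure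
  generated by itself.\<close>
lemma cinf_on_logL:
  assumes "cinf_on U (Lam lam)" "\<forall>q\<in>U. lam q > 0"
  shows "cinf_on U (logL lam)"
proof (rule cinf_on_cinf_closure[OF U, of "{logL lam}"])
  have dLam: "q \<in> U \<Longrightarrow> Lam lam differentiable at q" for q
    using assms(1) U cinf_on_imp_differentiable_at by blast
  define G where "G v = (\<lambda>q. 1 / 2 * (pd (Lam lam) v q + cnj (pd (Lam lam) v q)) * exp (- 1 * logL lam q))"
    for v
  have "G v \<in> cinf_closure U {logL lam}" for v
    unfolding G_def by (intro cinf_closure.intros cinf_on_pd assms(1)) simp
  moreover have "pd (logL lam) v q = G v q" if "q \<in> U" for q v
  proof -
    have "lam q > 0"
      using assms(2) that by blast
    then show ?thesis
      using pd_eqI[OF has_derivative_logL[OF dLam[OF that]]]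
      by (simp add: G_def complex_add_cnj exp_minus Lam_def logL_def exp_of_real field_simps)
  qed
  ultimately show "\<exists>G\<in>cinf_closure U {logL lam}. \<forall>q\<in>U. pd b v q = G q" if "b \<in> {logL lam}" for b v
    using that by blast
  have "logL lam differentiable at q" if "q \<in> U" for q
    using has_derivative_logL[OF dLam[OF that]] assms(2) that unfolding differentiable_def by blast
  then show "b differentiable_on U" if "b \<in> {logL lam}" for b
    using that by (simp add: differentiable_on_eq_differentiable_at[OF U])
qed (simp add: cinf_closure.generator)

end

section \<open>Wirtinger derivatives\<close>

text \<open>Cutting off outside U makes the Leibniz rules below hold at every point, so the simplifier
  can apply them under binders; the congruence rule lets it use q \<in> U when rewriting the argument.\<close>
definition wirtinger :: "'n::finite pt set \<Rightarrow> 'n pt \<Rightarrow> 'n pt \<Rightarrow> complex \<Rightarrow> ('n pt \<Rightarrow> complex) \<Rightarrow> 'n pt \<Rightarrow> complex"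
  where "wirtinger U x y c F p = (if p \<in> interior U then (pd F x p + c * pd F y p) / 2 else 0)"

lemma wirtinger_cong [cong]:
  "x = x' \<Longrightarrow> y = y' \<Longrightarrow> c = c' \<Longrightarrow> p = p' \<Longrightarrow> (\<And>q. q \<in> U =simp=> F q = G q) \<Longrightarrow>
    wirtinger U x y c F p = wirtinger U x' y' c' G p'"
  unfolding wirtinger_def simp_implies_def
  using pd_cong_open[OF open_interior, of p U F G] interior_subset by (metis (no_types, lifting) subsetD)

lemma wirtinger_outside: "p \<notin> U \<Longrightarrow> wirtinger U x y c F p = 0"
  using interior_subset[of U] by (auto simp: wirtinger_def)

context
  fixes U :: "'n::finite pt set"
  assumes U: "open U"
begin

lemma wirtinger_eq: "p \<in> U \<Longrightarrow> wirtinger U x y c F p = (pd F x p + c * pd F y p) / 2"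
  unfolding wirtinger_def by (simp add: interior_open U)

abbreviation "Dz \<equiv> wirtinger U (0, 1) (0, \<i>) (- \<i>)"
abbreviation "Dzb \<equiv> wirtinger U (0, 1) (0, \<i>) \<i>"
abbreviation "Ds k \<equiv> wirtinger U (axis k 1, 0) (axis k \<i>, 0) (- \<i>)"
abbreviation "Dsb k \<equiv> wirtinger U (axis k 1, 0) (axis k \<i>, 0) \<i>"

lemma dz_eq_Dz: "p \<in> U \<Longrightarrow> dz F p = Dz F p"
  and dzb_eq_Dzb: "p \<in> U \<Longrightarrow> dzb F p = Dzb F p"
  and ds_eq_Ds: "p \<in> U \<Longrightarrow> ds k F p = Ds k F p"
  and dsb_eq_Dsb: "p \<in> U \<Longrightarrow> dsb k F p = Dsb k F p"
  by (simp_all add: wirtinger_eq dz_def dzb_def ds_def dsb_def)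

lemma cinf_on_wirtinger:
  assumes "cinf_on U F"
  shows "cinf_on U (wirtinger U x y c F)"
proof (rule cinf_on_cong[OF U])
  show "cinf_on U (\<lambda>q. (pd F x q + c * pd F y q) / 2)"
    using assms U by (intro cinf_on_divide_const cinf_on_add cinf_on_mult cinf_on_const cinf_on_pd)
qed (simp add: wirtinger_eq)

lemma wirtinger_const: "wirtinger U x y c (\<lambda>q. a) p = 0"
  by (simp add: wirtinger_def pd_const)

lemma wirtinger_add:
  "cinf_on U F \<Longrightarrow> cinf_on U G \<Longrightarrow>
    wirtinger U x y c (\<lambda>q. F q + G q) p = wirtinger U x y c F p + wirtinger U x y c G p"
  by (cases "p \<in> U") (auto simp: wirtinger_outside wirtinger_eq pd_add cinf_on_imp_differentiable_at[OF U] field_simps)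

lemma wirtinger_mult:
  "cinf_on U F \<Longrightarrow> cinf_on U G \<Longrightarrow>
    wirtinger U x y c (\<lambda>q. F q * G q) p = wirtinger U x y c F p * G p + F p * wirtinger U x y c G p"
  by (cases "p \<in> U") (auto simp: wirtinger_outside wirtinger_eq pd_mult cinf_on_imp_differentiable_at[OF U] field_simps)

lemma wirtinger_exp: "cinf_on U F \<Longrightarrow> wirtinger U x y c (\<lambda>q. exp (F q)) p = exp (F p) * wirtinger U x y c F p"
  by (cases "p \<in> U") (auto simp: wirtinger_outside wirtinger_eq pd_exp cinf_on_imp_differentiable_at[OF U] field_simps)

lemma cnj_wirtinger: "cinf_on U F \<Longrightarrow> cnj (wirtinger U x y c F p) = wirtinger U x y (cnj c) (\<lambda>q. cnj (F q)) p"
  by (cases "p \<in> U") (auto simp: wirtinger_outside wirtinger_eq pd_cnj cinf_on_imp_differentiable_at[OF U])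

lemma wirtinger_minus: "cinf_on U F \<Longrightarrow> wirtinger U x y c (\<lambda>q. - F q) p = - wirtinger U x y c F p"
  using wirtinger_mult[OF cinf_on_const[OF U, of "- 1"], of F] by (simp add: wirtinger_const)

lemma wirtinger_diff:
  "cinf_on U F \<Longrightarrow> cinf_on U G \<Longrightarrow>
    wirtinger U x y c (\<lambda>q. F q - G q) p = wirtinger U x y c F p - wirtinger U x y c G p"
  using wirtinger_add[OF _ cinf_on_minus[OF U], of F G] by (simp add: wirtinger_minus)

lemma wirtinger_commute:
  assumes "cinf_on U F"
  shows "wirtinger U x y c (wirtinger U x' y' c' F) p = wirtinger U x' y' c' (wirtinger U x y c F) p"
proof (cases "p \<in> U")
  case True
  have diff: "F differentiable at p" "pd F v differentiable at p" for v
    using True assms cinf_on_pd cinf_on_imp_differentiable_at[OF U] by blast+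
  have pd_wirtinger: "pd (wirtinger U x y c F) v p = (pd (pd F x) v p + c * pd (pd F y) v p) / 2"
    for x y c v
  proof -
    have "pd (wirtinger U x y c F) v p = pd (\<lambda>q. (pd F x q + c * pd F y q) / 2) v p"
      by (rule pd_cong_open[OF U True]) (simp add: wirtinger_eq)
    also have "\<dots> = (pd (pd F x) v p + c * pd (pd F y) v p) / 2"
      by (rule pd_wirtinger_combination[OF diff(2) diff(2)])
    finally show ?thesis .
  qed
  have "pd (pd F v) w p = pd (pd F w) v p" for v w
    using diff True assms cinf_on_imp_differentiable_at[OF U] by (intro pd_symmetric[OF U True]) auto
  then show ?thesis
    unfolding wirtinger_eq[OF True] pd_wirtinger by (simp add: algebra_simps add_divide_distrib)
qed (simp add: wirtinger_outside)

text \<open>Oriented so that the simplifier moves Dz innermost, followed by Dzb, Ds k and Dsb l;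
  in this normal form the curvature equation Dzb (Dz (logL lam)) = Lam lam applies.\<close>
lemma Dz_Dzb_Ds_Dsb_commute:
  assumes "cinf_on U F"
  shows "Dz (Dzb F) p = Dzb (Dz F) p" "Dz (Ds k F) p = Ds k (Dz F) p" "Dz (Dsb k F) p = Dsb k (Dz F) p"
    "Dzb (Ds k F) p = Ds k (Dzb F) p" "Dzb (Dsb k F) p = Dsb k (Dzb F) p"
    "Ds k (Dsb l F) p = Dsb l (Ds k F) p"
  by (rule wirtinger_commute[OF assms])+

end

lemmas cinf_on_rules = cinf_on_const cinf_on_add cinf_on_mult cinf_on_exp cinf_on_cnj cinf_on_minus
  cinf_on_diff cinf_on_divide_const cinf_on_wirtinger

lemmas wirtinger_rules = wirtinger_const wirtinger_add wirtinger_mult wirtinger_exp wirtinger_minus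
  wirtinger_diff cnj_wirtinger

theorem lemma3p7:
  fixes U :: "'n::finite pt set" and lam :: "'n pt \<Rightarrow> real"
    and f :: "'n pt \<Rightarrow> complex" and g :: nat
  assumes "g \<ge> 2" and "CARD('n) = 3 * g - 3"
    and "open U"
    and "cinf_on U (Lam lam)" and "\<forall>p\<in>U. lam p > 0"
    and "\<forall>p\<in>U. dz (dzb (logL lam)) p = Lam lam p"
    and "cinf_on U f"
  shows "\<forall>p\<in>U. \<forall>k l.
    vbar lam l (xi lam k f) p - xi lam k (vbar lam l f) p
      = PPbar lam (ee lam k l) p * PP lam f p - 2 * ff lam k l p * Box lam f p
        + dz (ff lam k l) p * dzb f p / Lam lam p"
proof -
  note U = \<open>open U\<close>
  have L: "cinf_on U (logL lam)"
    using cinf_on_logL[OF U assms(4,5)] .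
  have Lam_exp: "Lam lam q = exp (logL lam q)" if "q \<in> U" for q
    using assms(5) that by (simp add: Lam_def logL_def exp_of_real)
  have logL_real: "cnj (logL lam q) = logL lam q" for q
    by (simp add: logL_def)
  have div_exp: "x / exp y = x * exp (- y)" for x y :: complex
    by (simp add: exp_minus divide_inverse)
  have curvature: "Dzb U (Dz U (logL lam)) q = exp (logL lam q)" if "q \<in> U" for q
    using assms(6) that Lam_exp Dz_Dzb_Ds_Dsb_commute(1)[OF U L]
    by (simp add: dz_eq_Dz[OF U] dzb_eq_Dzb[OF U])
  show ?thesis
    by (intro ballI allI, simp add: vbar_def xi_def PP_def PPbar_def Box_def ee_def ff_def AA_def aa_def
        dz_eq_Dz[OF U] dzb_eq_Dzb[OF U] ds_eq_Ds[OF U] dsb_eq_Dsb[OF U] Dz_Dzb_Ds_Dsb_commute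
        Lam_exp div_exp logL_real exp_cnj curvature L assms(7) U wirtinger_rules cinf_on_rules)
      (simp add: exp_minus field_simps)
qed

end
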